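(* Let $n\ge1$, with notation as in the context. Then for $0\le l\le k,k_1\le n-1$, $$\sum_{i=1}^n f_{kl}(\alpha_i)f_{k_1l}(\alpha_i)T_1(\alpha_i)\cdots T_l(\alpha_i)=\delta_{k,k_1}c_{kl},$$ and for $0\le l\le n-1$ and all $i,j\in\{l+1,\dots,n\}$, $$\sum_{k=l}^{n-1}\frac{1}{c_{kl}}f_{kl}(\alpha_i)f_{kl}(\alpha_j)T_1(\alpha_i)\cdots T_l(\alpha_i)=\delta_{ij}.$$
   Context: Principal embedding of $\mathfrak{sl}(2)$ in $\mathfrak{gl}(n)$: $Y=\sum_{i=1}^{n-1}E_{i+1,i}$, $H=\sum_{i=1}^n(n-2i+1)E_{ii}$, $X=\sum_{i=1}^{n-1}i(n-i)E_{i,i+1}$. $\alpha_i=n-2i+1$, $T_i(H)=\frac14(n^2-(H+2i-1)^2)$; for a polynomial $f$, $f(H)=\mathrm{diag}(f(\alpha_1),\dots,f(\alpha_n))$. For $0\le l\le k\le n-1$, $f_{kl}$ is the unique polynomial of degree $<n-l$ with $(\mathrm{ad}\,Y)^{k-l}(X^k)=X^lf_{kl}(H)$. Empty products of $T$'s equal $1$. $c_{kl}=\dfrac{(k-l)!\,(k!)^2}{(k+l)!\,(2k+1)}\,n(n^2-1^2)\cdots(n^2-k^2)$. *)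

theory Defs
  imports Complex_Main "HOL-Computational_Algebra.Polynomial"
begin

text \<open>n x n real matrices are represented as functions nat \<Rightarrow> nat \<Rightarrow> real,
  with rows/columns indexed by 1..n; all matrices built here vanish outside that range.\<close>

type_synonym rmat = "nat \<Rightarrow> nat \<Rightarrow> real"

definition mmul :: "nat \<Rightarrow> rmat \<Rightarrow> rmat \<Rightarrow> rmat" where
  "mmul n A B = (\<lambda>i j. \<Sum>m=1..n. A i m * B m j)"

definition midt :: "nat \<Rightarrow> rmat" where
  "midt n = (\<lambda>i j. if i = j \<and> 1 \<le> i \<and> i \<le> n then 1 else 0)"

fun mpow :: "nat \<Rightarrow> rmat \<Rightarrow> nat \<Rightarrow> rmat" where
  "mpow n A 0 = midt n"
| "mpow n A (Suc k) = mmul n A (mpow n A k)"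

definition meq :: "nat \<Rightarrow> rmat \<Rightarrow> rmat \<Rightarrow> bool" where
  "meq n A B \<longleftrightarrow> (\<forall>i\<in>{1..n}. \<forall>j\<in>{1..n}. A i j = B i j)"

definition Ymat :: "nat \<Rightarrow> rmat" where
  "Ymat n = (\<lambda>i j. if 1 \<le> j \<and> j \<le> n - 1 \<and> i = j + 1 then 1 else 0)"

definition Hmat :: "nat \<Rightarrow> rmat" where
  "Hmat n = (\<lambda>i j. if i = j \<and> 1 \<le> i \<and> i \<le> n then real n - 2 * real i + 1 else 0)"

definition Xmat :: "nat \<Rightarrow> rmat" where
  "Xmat n = (\<lambda>i j. if 1 \<le> i \<and> i \<le> n - 1 \<and> j = i + 1 then real i * (real n - real i) else 0)"

definition adY :: "nat \<Rightarrow> rmat \<Rightarrow> rmat" where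
  "adY n A = (\<lambda>i j. mmul n (Ymat n) A i j - mmul n A (Ymat n) i j)"

definition alpha :: "nat \<Rightarrow> nat \<Rightarrow> real" where
  "alpha n i = real n - 2 * real i + 1"

definition T :: "nat \<Rightarrow> nat \<Rightarrow> real \<Rightarrow> real" where
  "T n i x = ((real n)^2 - (x + 2 * real i - 1)^2) / 4"

text \<open>f(H) = diag(f(alpha_1),...,f(alpha_n)).\<close>
definition polyH :: "nat \<Rightarrow> real poly \<Rightarrow> rmat" where
  "polyH n f = (\<lambda>i j. if i = j \<and> 1 \<le> i \<and> i \<le> n then poly f (alpha n i) else 0)"

definition fkl :: "nat \<Rightarrow> nat \<Rightarrow> nat \<Rightarrow> real poly" where
  "fkl n k l = (THE f. degree f < n - l \<and>
      meq n (((adY n) ^^ (k - l)) (mpow n (Xmat n) k)) (mmul n (mpow n (Xmat n) l) (polyH n f)))"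

definition ckl :: "nat \<Rightarrow> nat \<Rightarrow> nat \<Rightarrow> real" where
  "ckl n k l = fact (k - l) * (fact k)^2 / (fact (k + l) * (2 * real k + 1))
      * real n * (\<Prod>m=1..k. (real n)^2 - (real m)^2)"

end

theory Submission
  imports Defs "Jordan_Normal_Form.Determinant"
begin

text \<open>
  By the sl(2) relations, (ad Y)^(k-l) (X^k) is supported on the l-th superdiagonal, so
  f_kl(alpha_(i+l)) is its i-th entry divided by the i-th entry of X^l, which equals
  T_1(alpha_(i+l)) ... T_l(alpha_(i+l)). The first identity therefore says that these
  diagonals are orthogonal for the inner product <u, w>_l = sum_i u_i w_i / (X^l)_(i,i+l).
  Summation by parts makes ad Y adjoint to ad X between consecutive superdiagonals, and
  ad X maps (ad Y)^j (X^k) to j (2k - j + 1) (ad Y)^(j-1) (X^k). Moving all factors ad Y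
  across gives 0 for k \<noteq> k1, and otherwise a product of these constants times the sum of
  the entries of X^k, which a Vandermonde-type binomial identity evaluates to c_kl.
  The second identity is the first one read column-wise: a square matrix whose rows are
  orthogonal has orthogonal columns.
\<close>

section \<open>Interpolation and orthogonality of columns\<close>

lemma interpolation_poly_unique:
  fixes x :: "'b \<Rightarrow> 'a::field"
  assumes S: "finite S" "S \<noteq> {}" and inj: "inj_on x S"
  shows "\<exists>!p. degree p < card S \<and> (\<forall>i\<in>S. poly p (x i) = y i)"
proof (rule ex_ex1I)
  define L where "L i = (\<Prod>j\<in>S - {i}. [:- x j, 1:])" for i
  define p where "p = (\<Sum>i\<in>S. Polynomial.smult (y i / poly (L i) (x i)) (L i))"
  have poly_L: "poly (L i) (x m) = (\<Prod>j\<in>S - {i}. x m - x j)" for i m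
    by (simp add: L_def poly_prod)
  have "degree (L i) \<le> card S - 1" if "i \<in> S" for i
  proof -
    have "degree (L i) \<le> (\<Sum>j\<in>S - {i}. degree [:- x j, 1:])"
      unfolding L_def using S by (intro order.trans[OF degree_prod_sum_le]) auto
    also have "\<dots> = card S - 1" using S that by simp
    finally show ?thesis .
  qed
  then have "degree p \<le> card S - 1"
    unfolding p_def using S by (intro degree_sum_le order.trans[OF degree_smult_le]) auto
  moreover have "card S > 0" using S by (simp add: card_gt_0_iff)
  ultimately have "degree p < card S" by linarith
  moreover have "poly p (x m) = y m" if m: "m \<in> S" for m
  proof -
    have "poly (L i) (x m) = 0" if "i \<in> S" "i \<noteq> m" for i
      unfolding poly_L using S m that by (subst prod_zero_iff) auto
    moreover have "poly (L m) (x m) \<noteq> 0"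
      unfolding poly_L using S m inj by (subst prod_zero_iff) (auto dest: inj_onD)
    ultimately show ?thesis
      unfolding p_def poly_sum using S m by (simp add: sum.remove)
  qed
  ultimately show "\<exists>p. degree p < card S \<and> (\<forall>i\<in>S. poly p (x i) = y i)" by blast
next
  fix p q
  assume p: "degree p < card S \<and> (\<forall>i\<in>S. poly p (x i) = y i)"
    and q: "degree q < card S \<and> (\<forall>i\<in>S. poly q (x i) = y i)"
  have "card (x ` S) = card S" using inj by (rule card_image)
  then show "p = q"
    using p q by (intro poly_eqI_degree[where A = "x ` S"]) auto
qed

lemma orthogonal_rows_imp_orthogonal_columns:
  fixes F :: "nat \<Rightarrow> nat \<Rightarrow> 'a::field"
  assumes c: "\<And>k. k < N \<Longrightarrow> c k \<noteq> 0" and w: "\<And>i. i < N \<Longrightarrow> w i \<noteq> 0"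
    and rows: "\<And>k k'. k < N \<Longrightarrow> k' < N \<Longrightarrow>
      (\<Sum>i<N. F k i * F k' i * w i) = (if k = k' then c k else 0)"
    and ij: "i < N" "j < N"
  shows "(\<Sum>k<N. 1 / c k * F k i * F k j * w i) = (if i = j then 1 else 0)"
proof -
  define A where "A = mat N N (\<lambda>(k, i). F k i * w i / c k)"
  define B where "B = mat N N (\<lambda>(i, k). F k i)"
  have "A * B = 1\<^sub>m N"
  proof (rule eq_matI)
    fix k k' assume "k < dim_row (1\<^sub>m N)" "k' < dim_col (1\<^sub>m N)"
    then have "k < N" "k' < N" by auto
    then have "(A * B) $$ (k, k') = (\<Sum>i<N. F k i * F k' i * w i) / c k"
      by (simp add: A_def B_def scalar_prod_def atLeast0LessThan sum_divide_distrib mult_ac)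
    then show "(A * B) $$ (k, k') = 1\<^sub>m N $$ (k, k')"
      using rows c \<open>k < N\<close> \<open>k' < N\<close> by simp
  qed (auto simp: A_def B_def)
  then have "B * A = 1\<^sub>m N"
    by (rule mat_mult_left_right_inverse[rotated 2]) (simp_all add: A_def B_def)
  moreover have "(B * A) $$ (i, j) = (\<Sum>k<N. F k i * F k j / c k) * w j"
    using ij by (simp add: A_def B_def scalar_prod_def atLeast0LessThan sum_distrib_right)
      (simp add: mult_ac times_divide_eq_right)
  ultimately have cols: "(\<Sum>k<N. F k i * F k j / c k) * w j = (if i = j then 1 else 0)"
    using ij by simp
  have "(\<Sum>k<N. 1 / c k * F k i * F k j * w i) = (\<Sum>k<N. F k i * F k j / c k) * w i"
    unfolding sum_distrib_right by (intro sum.cong) auto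
  then show ?thesis
    using cols w[OF ij(2)] by (cases "i = j") auto
qed

section \<open>Superdiagonal matrices and the sl(2) action\<close>

definition superdiag :: "nat \<Rightarrow> nat \<Rightarrow> (nat \<Rightarrow> real) \<Rightarrow> rmat" where
  "superdiag n l u = (\<lambda>i j. if 1 \<le> i \<and> j = i + l \<and> j \<le> n then u i else 0)"

definition diag_supported :: "nat \<Rightarrow> nat \<Rightarrow> (nat \<Rightarrow> real) \<Rightarrow> bool" where
  "diag_supported n l u \<longleftrightarrow> (\<forall>i. i = 0 \<or> n < i + l \<longrightarrow> u i = 0)"

definition xcoef :: "nat \<Rightarrow> nat \<Rightarrow> real" where
  "xcoef n i = real i * (real n - real i)"

definition xpow_diag :: "nat \<Rightarrow> nat \<Rightarrow> nat \<Rightarrow> real" where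
  "xpow_diag n l i = (\<Prod>j=i..<i+l. xcoef n j)"

definition adY_diag :: "(nat \<Rightarrow> real) \<Rightarrow> nat \<Rightarrow> real" where
  "adY_diag u i = u (i - 1) - u i"

text \<open>\<open>ad X\<close> maps \<open>superdiag n l u\<close> to \<open>superdiag n (l + 1) (adX_diag n l u)\<close>.\<close>

definition adX_diag :: "nat \<Rightarrow> nat \<Rightarrow> (nat \<Rightarrow> real) \<Rightarrow> nat \<Rightarrow> real" where
  "adX_diag n l u i = xcoef n i * u (Suc i) - xcoef n (i + l) * u i"

text \<open>\<open>adY_Xpow_diag n k j\<close> is the nonzero superdiagonal of \<open>(ad Y)\<^sup>j (X\<^sup>k)\<close>.\<close>

fun adY_Xpow_diag :: "nat \<Rightarrow> nat \<Rightarrow> nat \<Rightarrow> nat \<Rightarrow> real" where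
  "adY_Xpow_diag n k 0 = (\<lambda>i. if 1 \<le> i \<and> i + k \<le> n then xpow_diag n k i else 0)"
| "adY_Xpow_diag n k (Suc j) = adY_diag (adY_Xpow_diag n k j)"

lemma xpow_diag_Suc: "xpow_diag n (Suc l) i = xcoef n i * xpow_diag n l (Suc i)"
  unfolding xpow_diag_def by (simp add: prod.atLeast_Suc_lessThan)

lemma xpow_diag_Suc': "xpow_diag n (Suc l) i = xpow_diag n l i * xcoef n (i + l)"
  unfolding xpow_diag_def by simp

lemma xpow_diag_nonzero: "1 \<le> i \<Longrightarrow> i + l \<le> n \<Longrightarrow> xpow_diag n l i \<noteq> 0"
  unfolding xpow_diag_def xcoef_def by (auto simp: prod_zero_iff)

lemma mmul_Xmat_superdiag:
  "mmul n (Xmat n) (superdiag n l u) = superdiag n (Suc l) (\<lambda>i. xcoef n i * u (Suc i))"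
proof (intro ext)
  fix i j
  have "mmul n (Xmat n) (superdiag n l u) i j = (\<Sum>m=1..n. if m = i + 1 then
      (if 1 \<le> i \<and> i \<le> n - 1 then xcoef n i * superdiag n l u (i + 1) j else 0) else 0)"
    unfolding mmul_def by (rule sum.cong) (auto simp: Xmat_def xcoef_def)
  then show "mmul n (Xmat n) (superdiag n l u) i j
      = superdiag n (Suc l) (\<lambda>i. xcoef n i * u (Suc i)) i j"
    by (auto simp: superdiag_def)
qed

lemma mpow_Xmat: "mpow n (Xmat n) k = superdiag n k (xpow_diag n k)"
proof (induction k)
  case 0
  then show ?case by (auto simp: midt_def superdiag_def xpow_diag_def intro!: ext)
next
  case (Suc k)
  then show ?case by (simp add: mmul_Xmat_superdiag xpow_diag_Suc[abs_def])
qed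

lemma adY_superdiag:
  assumes "diag_supported n l u" "1 \<le> l"
  shows "adY n (superdiag n l u) = superdiag n (l - 1) (adY_diag u)"
proof (intro ext)
  fix i j
  have YS: "mmul n (Ymat n) (superdiag n l u) i j
      = (if 2 \<le> i \<and> j = i - 1 + l \<and> j \<le> n then u (i - 1) else 0)"
  proof -
    have "mmul n (Ymat n) (superdiag n l u) i j = (\<Sum>m=1..n. if m = i - 1 then
      (if 2 \<le> i \<and> i \<le> n then superdiag n l u (i - 1) j else 0) else 0)"
      unfolding mmul_def by (rule sum.cong) (auto simp: Ymat_def)
    then show ?thesis using assms(2) by (auto simp: superdiag_def)
  qed
  have SY: "mmul n (superdiag n l u) (Ymat n) i j
      = (if 1 \<le> i \<and> j + 1 = i + l \<and> j + 1 \<le> n then u i else 0)"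
  proof -
    have "mmul n (superdiag n l u) (Ymat n) i j = (\<Sum>m=1..n. if m = j + 1 then
      (if 1 \<le> j \<and> j \<le> n - 1 then superdiag n l u i (j + 1) else 0) else 0)"
      unfolding mmul_def by (rule sum.cong) (auto simp: Ymat_def)
    then show ?thesis using assms(2) by (auto simp: superdiag_def)
  qed
  show "adY n (superdiag n l u) i j = superdiag n (l - 1) (adY_diag u) i j"
  proof (cases "1 \<le> i \<and> j = i + (l - 1) \<and> j \<le> n")
    case True
    have u0: "u 0 = 0" and u_out: "n < i + l \<Longrightarrow> u i = 0"
      using assms(1) unfolding diag_supported_def by auto
    have "mmul n (Ymat n) (superdiag n l u) i j = u (i - 1)"
      using True assms(2) u0 unfolding YS by (cases "i = 1") auto
    moreover have "mmul n (superdiag n l u) (Ymat n) i j = u i"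
      using True assms(2) u_out unfolding SY by (cases "i + l \<le> n") auto
    ultimately show ?thesis using True unfolding adY_def superdiag_def adY_diag_def by simp
  next
    case False
    then show ?thesis using assms(2) unfolding adY_def YS SY by (auto simp: superdiag_def)
  qed
qed

lemma diag_supported_adY_diag:
  "diag_supported n (Suc l) u \<Longrightarrow> diag_supported n l (adY_diag u)"
  unfolding diag_supported_def adY_diag_def by force

lemma diag_supported_adY_Xpow_diag:
  "j \<le> k \<Longrightarrow> diag_supported n (k - j) (adY_Xpow_diag n k j)"
proof (induction j)
  case 0
  then show ?case by (simp add: diag_supported_def)
next
  case (Suc j)
  then show ?case using diag_supported_adY_diag[of n "k - Suc j"] by (simp add: Suc_diff_Suc)
qed

lemma adY_funpow_mpow_Xmat:
  "j \<le> k \<Longrightarrow> (adY n ^^ j) (mpow n (Xmat n) k) = superdiag n (k - j) (adY_Xpow_diag n k j)"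
proof (induction j)
  case 0
  then show ?case by (auto simp: mpow_Xmat superdiag_def intro!: ext)
next
  case (Suc j)
  then show ?case
    using adY_superdiag[OF diag_supported_adY_Xpow_diag[of j k n]] by (simp add: Suc_diff_Suc)
qed

lemma mmul_superdiag_polyH:
  "mmul n (superdiag n l u) (polyH n f) = superdiag n l (\<lambda>i. u i * poly f (alpha n (i + l)))"
proof (intro ext)
  fix i j
  have "mmul n (superdiag n l u) (polyH n f) i j = (\<Sum>m=1..n. if m = j then
      (if 1 \<le> j \<and> j \<le> n then superdiag n l u i j * poly f (alpha n j) else 0) else 0)"
    unfolding mmul_def by (rule sum.cong) (auto simp: polyH_def)
  then show "mmul n (superdiag n l u) (polyH n f) i j
      = superdiag n l (\<lambda>i. u i * poly f (alpha n (i + l))) i j"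
    by (auto simp: superdiag_def)
qed

lemma meq_superdiag_iff:
  "meq n (superdiag n l u) (superdiag n l v) \<longleftrightarrow> (\<forall>i. 1 \<le> i \<and> i + l \<le> n \<longrightarrow> u i = v i)"
  unfolding meq_def superdiag_def
proof (intro iffI allI impI)
  fix i assume eq: "\<forall>i\<in>{1..n}. \<forall>j\<in>{1..n}. (if 1 \<le> i \<and> j = i + l \<and> j \<le> n then u i else 0)
      = (if 1 \<le> i \<and> j = i + l \<and> j \<le> n then v i else 0)" and i: "1 \<le> i \<and> i + l \<le> n"
  show "u i = v i" using eq[rule_format, of i "i + l"] i by simp
qed auto

text \<open>On diagonals, \<open>ad X ad Y - ad Y ad X = ad H\<close>, and \<open>ad H\<close> multiplies the
  \<open>(l + 1)\<close>-st superdiagonal by \<open>2 (l + 1)\<close>.\<close>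

lemma adX_adY_diag_commutator:
  assumes "u 0 = 0"
  shows "adX_diag n l (adY_diag u) i - adY_diag (adX_diag n (Suc l) u) i
    = 2 * real (Suc l) * u i"
proof (cases i)
  case 0
  then show ?thesis using assms by (simp add: adX_diag_def adY_diag_def xcoef_def)
next
  case (Suc i')
  then show ?thesis by (simp add: adX_diag_def adY_diag_def xcoef_def algebra_simps)
qed

lemma adX_diag_Xpow: "adX_diag n k (adY_Xpow_diag n k 0) i = 0"
proof (cases "i = 0")
  case True
  then show ?thesis by (simp add: adX_diag_def xcoef_def)
next
  case False
  have "xcoef n i * xpow_diag n k (Suc i) = xpow_diag n k i * xcoef n (i + k)"
    using xpow_diag_Suc[of n k i] xpow_diag_Suc'[of n k i] by simp
  moreover have "xcoef n n = 0" by (simp add: xcoef_def)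
  ultimately show ?thesis
    using False by (cases "i + k = n") (auto simp: adX_diag_def)
qed

lemma adX_diag_adY_Xpow_diag:
  "j \<le> k \<Longrightarrow> adX_diag n (k - j) (adY_Xpow_diag n k j) i
    = real j * real (k + k - j + 1) * adY_Xpow_diag n k (j - 1) i"
proof (induction j arbitrary: i)
  case 0
  then show ?case using adX_diag_Xpow[of n k i] by simp
next
  case (Suc j)
  have supp: "diag_supported n (Suc (k - Suc j)) (adY_Xpow_diag n k j)"
    using diag_supported_adY_Xpow_diag[of j k n] Suc.prems by (simp add: Suc_diff_Suc)
  have "adX_diag n (k - Suc j) (adY_Xpow_diag n k (Suc j)) i
      = adY_diag (adX_diag n (k - j) (adY_Xpow_diag n k j)) i
        + 2 * real (k - j) * adY_Xpow_diag n k j i"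
    using adX_adY_diag_commutator[of "adY_Xpow_diag n k j" n "k - Suc j" i] supp Suc.prems
    by (simp add: diag_supported_def Suc_diff_Suc)
  also have "adY_diag (adX_diag n (k - j) (adY_Xpow_diag n k j)) i
      = real j * real (k + k - j + 1) * adY_diag (adY_Xpow_diag n k (j - 1)) i"
    using Suc.IH[of "i - 1"] Suc.IH[of i] Suc.prems
    by (simp add: adY_diag_def right_diff_distrib)
  also have "\<dots> = real j * real (k + k - j + 1) * adY_Xpow_diag n k j i"
    by (cases j) simp_all
  finally show ?case
    using Suc.prems by (simp add: of_nat_diff algebra_simps)
qed

definition diag_inner :: "nat \<Rightarrow> nat \<Rightarrow> (nat \<Rightarrow> real) \<Rightarrow> (nat \<Rightarrow> real) \<Rightarrow> real" where
  "diag_inner n l u w = (\<Sum>i=1..n-l. u i * w i / xpow_diag n l i)"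

lemma diag_inner_commute: "diag_inner n l u w = diag_inner n l w u"
  unfolding diag_inner_def by (simp add: mult.commute)

lemma adX_diag_div_xpow_diag:
  assumes "1 \<le> i" "i + Suc l \<le> n"
  shows "adX_diag n l w i / xpow_diag n (Suc l) i
    = w (Suc i) / xpow_diag n l (Suc i) - w i / xpow_diag n l i"
  using assms xpow_diag_nonzero[of i l n] xpow_diag_nonzero[of "Suc i" l n]
    xpow_diag_nonzero[of i "Suc l" n] xpow_diag_Suc[of n l i] xpow_diag_Suc'[of n l i]
  by (simp add: adX_diag_def field_simps)

text \<open>Summation by parts; the boundary terms vanish because \<open>u\<close> is supported.\<close>

lemma diag_inner_adY_diag:
  assumes "Suc l \<le> n" "diag_supported n (Suc l) u"
  shows "diag_inner n l (adY_diag u) w = diag_inner n (Suc l) u (adX_diag n l w)"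
proof -
  define N where "N = n - Suc l"
  have nl: "n - l = Suc N" using assms(1) by (simp add: N_def)
  have u0: "u 0 = 0" and uN: "u (Suc N) = 0" using assms nl by (auto simp: diag_supported_def)
  have "diag_inner n l (adY_diag u) w
      = (\<Sum>i=1..Suc N. u (i - 1) * w i / xpow_diag n l i)
        - (\<Sum>i=1..Suc N. u i * w i / xpow_diag n l i)"
    unfolding diag_inner_def nl adY_diag_def
    by (simp add: sum_subtractf left_diff_distrib diff_divide_distrib)
  also have "(\<Sum>i=1..Suc N. u (i - 1) * w i / xpow_diag n l i)
      = (\<Sum>i=1..N. u i * w (Suc i) / xpow_diag n l (Suc i))"
    using u0
    by (simp add: sum.atLeast_Suc_atMost sum.shift_bounds_cl_Suc_ivl del: sum.cl_ivl_Suc)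
  also have "(\<Sum>i=1..Suc N. u i * w i / xpow_diag n l i)
      = (\<Sum>i=1..N. u i * w i / xpow_diag n l i)"
    using uN by simp
  also have "(\<Sum>i=1..N. u i * w (Suc i) / xpow_diag n l (Suc i))
        - (\<Sum>i=1..N. u i * w i / xpow_diag n l i)
      = (\<Sum>i=1..N. u i * (adX_diag n l w i / xpow_diag n (Suc l) i))"
    unfolding sum_subtractf[symmetric]
  proof (rule sum.cong)
    fix i assume "i \<in> {1..N}"
    then have "adX_diag n l w i / xpow_diag n (Suc l) i
        = w (Suc i) / xpow_diag n l (Suc i) - w i / xpow_diag n l i"
      using assms(1) by (intro adX_diag_div_xpow_diag) (auto simp: N_def)
    then show "u i * w (Suc i) / xpow_diag n l (Suc i) - u i * w i / xpow_diag n l i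
        = u i * (adX_diag n l w i / xpow_diag n (Suc l) i)"
      by (simp add: right_diff_distrib)
  qed simp
  also have "\<dots> = diag_inner n (Suc l) u (adX_diag n l w)"
    unfolding diag_inner_def N_def by simp
  finally show ?thesis .
qed

lemma diag_inner_adY_Xpow_diag_step:
  assumes "l < k" "l \<le> k'" "k < n"
  shows "diag_inner n l (adY_Xpow_diag n k (k - l)) (adY_Xpow_diag n k' (k' - l))
    = real (k' - l) * real (k' + l + 1)
      * diag_inner n (Suc l) (adY_Xpow_diag n k (k - Suc l)) (adY_Xpow_diag n k' (k' - Suc l))"
proof -
  have "adY_Xpow_diag n k (k - l) = adY_diag (adY_Xpow_diag n k (k - Suc l))"
    using assms(1) by (simp add: Suc_diff_Suc[symmetric])
  then have "diag_inner n l (adY_Xpow_diag n k (k - l)) (adY_Xpow_diag n k' (k' - l))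
      = diag_inner n (Suc l) (adY_Xpow_diag n k (k - Suc l))
          (adX_diag n l (adY_Xpow_diag n k' (k' - l)))"
    using assms diag_supported_adY_Xpow_diag[of "k - Suc l" k n] by (simp add: diag_inner_adY_diag)
  also have "adX_diag n l (adY_Xpow_diag n k' (k' - l))
      = (\<lambda>i. real (k' - l) * real (k' + l + 1) * adY_Xpow_diag n k' (k' - Suc l) i)"
    using adX_diag_adY_Xpow_diag[of "k' - l" k' n] assms(2) by (auto simp: diff_diff_left)
  finally show ?thesis
    by (simp add: diag_inner_def sum_distrib_left algebra_simps)
qed

lemma diag_inner_adY_Xpow_diag:
  assumes "l \<le> k'" "k' \<le> k" "k < n"
  shows "diag_inner n l (adY_Xpow_diag n k (k - l)) (adY_Xpow_diag n k' (k' - l)) =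
    (if k' = k then (\<Prod>m=l..<k. real (k - m) * real (k + m + 1)) * (\<Sum>i=1..n-k. xpow_diag n k i)
     else 0)"
  using assms
proof (induction "k - l" arbitrary: l)
  case 0
  then have "l = k" "k' = k" by auto
  moreover have "diag_inner n k (adY_Xpow_diag n k 0) (adY_Xpow_diag n k 0)
      = (\<Sum>i=1..n-k. xpow_diag n k i)"
    unfolding diag_inner_def by (intro sum.cong) (auto simp: xpow_diag_nonzero)
  ultimately show ?case by simp
next
  case (Suc d)
  show ?case
  proof (cases "k' = l")
    case True
    then show ?thesis
      using diag_inner_adY_Xpow_diag_step[of l k k' n] Suc.hyps(2) Suc.prems by simp
  next
    case False
    have IH: "diag_inner n (Suc l) (adY_Xpow_diag n k (k - Suc l))
        (adY_Xpow_diag n k' (k' - Suc l)) =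
      (if k' = k
       then (\<Prod>m=Suc l..<k. real (k - m) * real (k + m + 1)) * (\<Sum>i=1..n-k. xpow_diag n k i)
       else 0)"
      using Suc False by (intro Suc.hyps) auto
    have "l < k" using Suc by simp
    then show ?thesis
      using Suc.prems by (simp add: diag_inner_adY_Xpow_diag_step IH prod.atLeast_Suc_lessThan)
  qed
qed

section \<open>Evaluation of the norms\<close>

lemma prod_consecutive_eq_fact_choose:
  assumes "1 \<le> i"
  shows "(\<Prod>j=i..<i+k. real j) = fact k * real ((i + k - 1) choose k)"
proof -
  have "(\<Prod>j=i..<i+k. real j) = pochhammer (real i) k"
    by (simp add: pochhammer_prod prod.atLeastLessThan_shift_0[where m = i] add.commute)
  also have "\<dots> = fact k * real ((i + k - 1) choose k)"
    using assms by (simp add: binomial_gbinomial gbinomial_pochhammer' of_nat_diff)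
  finally show ?thesis .
qed

lemma prod_consecutive_diff_eq_fact_choose:
  assumes "i \<le> n"
  shows "(\<Prod>j=i..<i+k. real n - real j) = fact k * real ((n - i) choose k)"
proof -
  have "(\<Prod>j=i..<i+k. real n - real j) = (\<Prod>t=0..<k. real (n - i) - real t)"
    using assms by (simp add: prod.atLeastLessThan_shift_0[where m = i] of_nat_diff algebra_simps)
  also have "\<dots> = fact k * real ((n - i) choose k)"
    by (simp add: binomial_gbinomial gbinomial_prod_rev)
  finally show ?thesis .
qed

lemma xpow_diag_eq_fact_choose:
  assumes "1 \<le> i" "i \<le> n"
  shows "xpow_diag n k i = fact k ^ 2 * real ((i + k - 1) choose k) * real ((n - i) choose k)"
  unfolding xpow_diag_def xcoef_def prod.distrib
  using assms by (simp add: prod_consecutive_eq_fact_choose prod_consecutive_diff_eq_fact_choose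
      power2_eq_square)

lemma sum_choose_mult_choose:
  "(\<Sum>i=1..N. ((i + k - 1) choose k) * ((N - i) choose b)) = (N + k) choose (k + b + 1)"
proof (induction N arbitrary: b)
  case 0
  then show ?case by simp
next
  case (Suc N)
  show ?case
  proof (cases b)
    case 0
    have "(\<Sum>i=1..Suc N. ((i + k - 1) choose k) * ((Suc N - i) choose b))
        = (\<Sum>i=1..N. (i + k - 1) choose k) + ((N + k) choose k)"
      using 0 by simp
    also have "(\<Sum>i=1..N. (i + k - 1) choose k) = (N + k) choose (k + 1)"
      using Suc.IH[of 0] by simp
    finally show ?thesis using 0 by simp
  next
    case (Suc b')
    have "(\<Sum>i=1..Suc N. ((i + k - 1) choose k) * ((Suc N - i) choose b))
        = (\<Sum>i=1..N. ((i + k - 1) choose k) * ((Suc N - i) choose b))"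
      using Suc by simp
    also have "\<dots> = (\<Sum>i=1..N. ((i + k - 1) choose k) * ((N - i) choose b')
            + ((i + k - 1) choose k) * ((N - i) choose b))"
      by (rule sum.cong) (auto simp: Suc Suc_diff_le algebra_simps)
    also have "\<dots> = ((N + k) choose (k + b' + 1)) + ((N + k) choose (k + b + 1))"
      using Suc.IH[of b'] Suc.IH[of b] by (simp add: sum.distrib)
    finally show ?thesis using Suc by simp
  qed
qed

lemma sum_xpow_diag:
  assumes "k \<le> n"
  shows "(\<Sum>i=1..n-k. xpow_diag n k i) = fact k ^ 2 * real ((n + k) choose (2 * k + 1))"
proof -
  have "(\<Sum>i=1..n-k. xpow_diag n k i)
      = (\<Sum>i=1..n. fact k ^ 2 * real (((i + k - 1) choose k) * ((n - i) choose k)))"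
    by (rule sum.mono_neutral_cong_left) (auto simp: xpow_diag_eq_fact_choose)
  also have "\<dots> = fact k ^ 2 * real (\<Sum>i=1..n. ((i + k - 1) choose k) * ((n - i) choose k))"
    by (simp add: sum_distrib_left)
  also have "\<dots> = fact k ^ 2 * real ((n + k) choose (2 * k + 1))"
    using sum_choose_mult_choose[where N = n and k = k and b = k] by (simp add: mult_2)
  finally show ?thesis .
qed

lemma fact_add_eq_prod_diff_squares:
  "k < n \<Longrightarrow>
    (fact (n + k) :: real) = fact (n - k - 1) * real n * (\<Prod>m=1..k. real n ^ 2 - real m ^ 2)"
proof (induction k)
  case 0
  then show ?case by (cases n) auto
next
  case (Suc k)
  let ?P = "\<Prod>m=1..k. real n ^ 2 - real m ^ 2"
  have IH: "(fact (n + k) :: real) = fact (n - k - 1) * real n * ?P"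
    using Suc by simp
  have nk: "n - k - 1 = Suc (n - Suc k - 1)"
    using Suc.prems by simp
  have f: "(fact (n - k - 1) :: real) = real (n - k - 1) * fact (n - Suc k - 1)"
    unfolding nk by (simp only: fact_Suc of_nat_mult of_nat_fact)
  have "(fact (n + Suc k) :: real) = real (n + k + 1) * fact (n + k)"
    by simp
  also have "\<dots> = fact (n - Suc k - 1) * real n * (?P * (real (n + k + 1) * real (n - k - 1)))"
    unfolding IH f by (simp add: algebra_simps)
  also have "real (n + k + 1) * real (n - k - 1) = real n ^ 2 - real (Suc k) ^ 2"
    using Suc.prems by (simp add: of_nat_diff power2_eq_square algebra_simps)
  finally show ?case by simp
qed

lemma prod_diff_squares_eq_fact_choose:
  assumes "k < n"
  shows "real n * (\<Prod>m=1..k. real n ^ 2 - real m ^ 2)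
    = fact (2 * k + 1) * real ((n + k) choose (2 * k + 1))"
proof -
  have "2 * k + 1 \<le> n + k" "n + k - (2 * k + 1) = n - k - 1"
    using assms by simp_all
  then have "fact (2 * k + 1) * fact (n - k - 1) * ((n + k) choose (2 * k + 1)) = fact (n + k)"
    using binomial_fact_lemma[of "2 * k + 1" "n + k"] by simp
  then have "real (fact (2 * k + 1) * fact (n - k - 1) * ((n + k) choose (2 * k + 1)))
      = real (fact (n + k))"
    by (rule arg_cong)
  then have "fact (2 * k + 1) * real ((n + k) choose (2 * k + 1)) * fact (n - k - 1)
      = (real n * (\<Prod>m=1..k. real n ^ 2 - real m ^ 2)) * fact (n - k - 1)"
    unfolding of_nat_mult of_nat_fact fact_add_eq_prod_diff_squares[OF assms]
    by (simp only: mult_ac)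
  then show ?thesis
    by (rule mult_right_cancel[THEN iffD1, OF fact_nonzero, symmetric])
qed

lemma prod_raising_coeffs:
  "l \<le> k \<Longrightarrow>
    (\<Prod>m=l..<k. real (k - m) * real (k + m + 1)) * fact (k + l) = fact (k - l) * fact (2 * k)"
proof (induction "k - l" arbitrary: l)
  case 0
  then show ?case by (simp add: mult_2)
next
  case (Suc d)
  let ?P = "\<lambda>l. \<Prod>m=l..<k. real (k - m) * real (k + m + 1)"
  have "l < k" using Suc.hyps(2) by simp
  have "?P l * fact (k + l) = real (k - l) * (?P (Suc l) * (real (k + l + 1) * fact (k + l)))"
    unfolding prod.atLeast_Suc_lessThan[OF \<open>l < k\<close>] by (simp only: mult_ac)
  also have "real (k + l + 1) * fact (k + l) = (fact (k + Suc l) :: real)"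
    by simp
  also have "?P (Suc l) * fact (k + Suc l) = fact (k - Suc l) * fact (2 * k)"
    using Suc by (intro Suc.hyps) auto
  also have "real (k - l) * (fact (k - Suc l) * fact (2 * k))
      = (fact (k - l) * fact (2 * k) :: real)"
    using \<open>l < k\<close> by (simp add: fact_reduce[of "k - l"])
  finally show ?case .
qed

lemma ckl_eq_prod_sum_xpow_diag:
  assumes "l \<le> k" "k < n"
  shows "ckl n k l
    = (\<Prod>m=l..<k. real (k - m) * real (k + m + 1)) * (\<Sum>i=1..n-k. xpow_diag n k i)"
proof -
  define C where "C = real ((n + k) choose (2 * k + 1))"
  have cancel: "A * K / (B * D) * ((D * E) * C) = A * E / B * (K * C)"
    if "B \<noteq> 0" "D \<noteq> 0" for A K B D E :: real
    using that by (simp add: field_simps)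
  have "ckl n k l = fact (k - l) * fact k ^ 2 / (fact (k + l) * (2 * real k + 1))
      * (((2 * real k + 1) * fact (2 * k)) * C)"
  proof -
    have "(fact (2 * k + 1) :: real) = (2 * real k + 1) * fact (2 * k)"
      by simp
    then show ?thesis
      unfolding ckl_def mult.assoc[of _ "real n"] prod_diff_squares_eq_fact_choose[OF assms(2)]
        C_def by (simp only: mult.assoc)
  qed
  also have "\<dots> = fact (k - l) * fact (2 * k) / fact (k + l) * (fact k ^ 2 * C)"
    by (rule cancel) (simp_all add: add_nonneg_eq_0_iff)
  also have "fact (k - l) * fact (2 * k) / fact (k + l)
      = (\<Prod>m=l..<k. real (k - m) * real (k + m + 1))"
    using nonzero_eq_divide_eq[THEN iffD2, OF fact_nonzero prod_raising_coeffs[OF assms(1)]]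
    by simp
  also have "fact k ^ 2 * C = (\<Sum>i=1..n-k. xpow_diag n k i)"
    using sum_xpow_diag[of k n] assms unfolding C_def by simp
  finally show ?thesis .
qed

lemma ckl_nonzero:
  assumes "k < n"
  shows "ckl n k l \<noteq> 0"
proof -
  have "real m ^ 2 < real n ^ 2" if "m \<in> {1..k}" for m
    using that assms by (intro power_strict_mono) auto
  then show ?thesis
    using assms unfolding ckl_def by (simp add: add_nonneg_eq_0_iff)
qed

section \<open>The polynomials f_kl\<close>

lemma T_alpha: "T n m (alpha n i) = (real i - real m) * (real n - real i + real m)"
  unfolding T_def alpha_def by (simp add: power2_eq_square field_simps)

lemma prod_T_alpha: "l < i \<Longrightarrow> (\<Prod>m=1..l. T n m (alpha n i)) = xpow_diag n l (i - l)"
proof (induction l)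
  case 0
  then show ?case by (simp add: xpow_diag_def)
next
  case (Suc l)
  have "T n (Suc l) (alpha n i) = xcoef n (i - Suc l)"
    using Suc.prems by (simp add: T_alpha xcoef_def of_nat_diff)
  then show ?case
    using Suc xpow_diag_Suc[of n l "i - Suc l"] by (simp add: Suc_diff_Suc mult.commute)
qed

lemma prod_T_alpha_eq_0: "1 \<le> i \<Longrightarrow> i \<le> l \<Longrightarrow> (\<Prod>m=1..l. T n m (alpha n i)) = 0"
  by (subst prod_zero_iff) (auto intro!: bexI[of _ i] simp: T_alpha)

lemma sum_times_prod_T_alpha_from_Suc:
  "(\<Sum>i=1..n. g i * (\<Prod>m=1..l. T n m (alpha n i)))
    = (\<Sum>i=l+1..n. g i * (\<Prod>m=1..l. T n m (alpha n i)))"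
proof -
  have "\<forall>i\<in>{1..n} - {l+1..n}. (\<Prod>m=1..l. T n m (alpha n i)) = 0"
  proof
    fix i assume "i \<in> {1..n} - {l+1..n}"
    then show "(\<Prod>m=1..l. T n m (alpha n i)) = 0" by (intro prod_T_alpha_eq_0) auto
  qed
  then show ?thesis
    by (intro sum.mono_neutral_right) auto
qed

lemma fkl_interpolates:
  assumes "l \<le> k" "1 \<le> i" "i + l \<le> n"
  shows "xpow_diag n l i * poly (fkl n k l) (alpha n (i + l)) = adY_Xpow_diag n k (k - l) i"
proof -
  define v where "v = adY_Xpow_diag n k (k - l)"
  define S where "S = {1..n - l}"
  have spec_iff: "degree f < n - l \<and> meq n ((adY n ^^ (k - l)) (mpow n (Xmat n) k))
      (mmul n (mpow n (Xmat n) l) (polyH n f))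
    \<longleftrightarrow> degree f < card S \<and> (\<forall>i\<in>S. poly f (alpha n (i + l)) = v i / xpow_diag n l i)" for f
  proof -
    have "(adY n ^^ (k - l)) (mpow n (Xmat n) k) = superdiag n l v"
      using adY_funpow_mpow_Xmat[of "k - l" k n] assms(1) by (simp add: v_def)
    moreover have "mmul n (mpow n (Xmat n) l) (polyH n f)
        = superdiag n l (\<lambda>i. xpow_diag n l i * poly f (alpha n (i + l)))"
      by (simp add: mpow_Xmat mmul_superdiag_polyH)
    moreover have "v i = xpow_diag n l i * poly f (alpha n (i + l))
        \<longleftrightarrow> poly f (alpha n (i + l)) = v i / xpow_diag n l i" if "i \<in> S" for i
      using that xpow_diag_nonzero[of i l n] by (auto simp: S_def field_simps)
    ultimately show ?thesis
      by (auto simp: meq_superdiag_iff S_def xpow_diag_nonzero)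
  qed
  moreover have "\<exists>!f. degree f < card S
      \<and> (\<forall>i\<in>S. poly f (alpha n (i + l)) = v i / xpow_diag n l i)"
    using assms by (intro interpolation_poly_unique) (auto simp: S_def inj_on_def alpha_def)
  ultimately have "\<forall>i\<in>S. poly (fkl n k l) (alpha n (i + l)) = v i / xpow_diag n l i"
    unfolding fkl_def by (metis (no_types, lifting) theI')
  then show ?thesis
    using assms xpow_diag_nonzero[of i l n] by (auto simp: S_def v_def field_simps)
qed

lemma fkl_orthogonal:
  assumes "l \<le> k" "l \<le> k'" "k < n" "k' < n"
  shows "(\<Sum>i=1..n. poly (fkl n k l) (alpha n i) * poly (fkl n k' l) (alpha n i)
      * (\<Prod>m=1..l. T n m (alpha n i))) = (if k = k' then ckl n k l else 0)"
proof -
  have "(\<Sum>i=1..n. poly (fkl n k l) (alpha n i) * poly (fkl n k' l) (alpha n i)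
      * (\<Prod>m=1..l. T n m (alpha n i)))
      = (\<Sum>i=1..n-l. poly (fkl n k l) (alpha n (i + l)) * poly (fkl n k' l) (alpha n (i + l))
      * (\<Prod>m=1..l. T n m (alpha n (i + l))))"
    unfolding sum_times_prod_T_alpha_from_Suc
    using sum.shift_bounds_cl_nat_ivl[of _ 1 l "n - l"] assms by simp
  also have "\<dots> = diag_inner n l (adY_Xpow_diag n k (k - l)) (adY_Xpow_diag n k' (k' - l))"
    unfolding diag_inner_def
  proof (rule sum.cong)
    fix i assume i: "i \<in> {1..n - l}"
    then have "xpow_diag n l i \<noteq> 0"
      by (intro xpow_diag_nonzero) auto
    moreover have "(\<Prod>m=1..l. T n m (alpha n (i + l))) = xpow_diag n l i"
      using i prod_T_alpha[of l "i + l" n] by simp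
    moreover have
      "adY_Xpow_diag n k (k - l) i = xpow_diag n l i * poly (fkl n k l) (alpha n (i + l))"
      "adY_Xpow_diag n k' (k' - l) i = xpow_diag n l i * poly (fkl n k' l) (alpha n (i + l))"
      using i assms fkl_interpolates[of l k i n] fkl_interpolates[of l k' i n] by auto
    ultimately show "poly (fkl n k l) (alpha n (i + l)) * poly (fkl n k' l) (alpha n (i + l))
        * (\<Prod>m=1..l. T n m (alpha n (i + l)))
      = adY_Xpow_diag n k (k - l) i * adY_Xpow_diag n k' (k' - l) i / xpow_diag n l i"
      by (simp add: field_simps)
  qed simp
  also have "\<dots> = (if k = k' then ckl n k l else 0)"
    using assms diag_inner_adY_Xpow_diag[of l k' k n] diag_inner_adY_Xpow_diag[of l k k' n]
    by (cases "k' \<le> k") (auto simp: diag_inner_commute ckl_eq_prod_sum_xpow_diag)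
  finally show ?thesis .
qed

lemma fkl_dual_orthogonal:
  assumes "l < n" "i \<in> {l+1..n}" "j \<in> {l+1..n}"
  shows "(\<Sum>k=l..n-1. 1 / ckl n k l * poly (fkl n k l) (alpha n i)
      * poly (fkl n k l) (alpha n j) * (\<Prod>m=1..l. T n m (alpha n i))) = (if i = j then 1 else 0)"
proof -
  define N where "N = n - l"
  define F where "F r s = poly (fkl n (r + l) l) (alpha n (s + l + 1))" for r s
  define w where "w s = (\<Prod>m=1..l. T n m (alpha n (s + l + 1)))" for s
  define c where "c r = ckl n (r + l) l" for r
  have shift: "(\<Sum>s<N. g (s + l + 1)) = (\<Sum>i=l+1..n. g i)" for g :: "nat \<Rightarrow> real"
    by (rule sum.reindex_bij_witness[where i = "\<lambda>i. i - l - 1" and j = "\<lambda>s. s + l + 1"])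
      (use assms in \<open>auto simp: N_def\<close>)
  have rows: "(\<Sum>s<N. F r s * F r' s * w s) = (if r = r' then c r else 0)"
    if "r < N" "r' < N" for r r'
    using shift[of "\<lambda>i. poly (fkl n (r + l) l) (alpha n i) * poly (fkl n (r' + l) l) (alpha n i)
        * (\<Prod>m=1..l. T n m (alpha n i))"] that
      fkl_orthogonal[of l "r + l" "r' + l" n] sum_times_prod_T_alpha_from_Suc
    by (simp add: F_def w_def c_def N_def)
  have "c r \<noteq> 0" if "r < N" for r
    using that ckl_nonzero[of "r + l" n l] by (simp add: c_def N_def)
  moreover have "w s \<noteq> 0" if "s < N" for s
    using that prod_T_alpha[of l "s + l + 1" n] xpow_diag_nonzero[of "s + 1" l n]
    by (simp add: w_def N_def)
  moreover have "i - l - 1 < N" "j - l - 1 < N"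
    using assms by (auto simp: N_def)
  ultimately have "(\<Sum>r<N. 1 / c r * F r (i - l - 1) * F r (j - l - 1) * w (i - l - 1))
      = (if i - l - 1 = j - l - 1 then 1 else 0)"
    using rows by (intro orthogonal_rows_imp_orthogonal_columns) auto
  moreover have "(\<Sum>k=l..n-1. 1 / ckl n k l * poly (fkl n k l) (alpha n i)
      * poly (fkl n k l) (alpha n j) * (\<Prod>m=1..l. T n m (alpha n i)))
      = (\<Sum>r<N. 1 / c r * F r (i - l - 1) * F r (j - l - 1) * w (i - l - 1))"
  proof -
    have "{l..n-1} = {l..<l + N}"
      using assms by (auto simp: N_def)
    then show ?thesis
      using assms by (simp add: sum.atLeastLessThan_shift_0[where m = l] lessThan_atLeast0
          F_def w_def c_def add.commute)
  qed
  moreover have "i - l - 1 = j - l - 1 \<longleftrightarrow> i = j"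
    using assms by auto
  ultimately show ?thesis
    by simp
qed

theorem proposition8p3p1:
  fixes n :: nat
  assumes "n \<ge> 1"
  shows "(\<forall>k k1 l. l \<le> k \<and> l \<le> k1 \<and> k \<le> n - 1 \<and> k1 \<le> n - 1 \<longrightarrow>
           (\<Sum>i=1..n. poly (fkl n k l) (alpha n i) * poly (fkl n k1 l) (alpha n i)
              * (\<Prod>m=1..l. T n m (alpha n i)))
           = (if k = k1 then ckl n k l else 0))
       \<and> (\<forall>l i j. l \<le> n - 1 \<and> i \<in> {l+1..n} \<and> j \<in> {l+1..n} \<longrightarrow>
           (\<Sum>k=l..n-1. (1 / ckl n k l) * poly (fkl n k l) (alpha n i) * poly (fkl n k l) (alpha n j)
              * (\<Prod>m=1..l. T n m (alpha n i)))
           = (if i = j then 1 else 0))"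
  using assms by (intro conjI allI impI fkl_orthogonal fkl_dual_orthogonal) auto

end
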